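(* Let $k\in\{1,\dots,n\}$ and let $R$ be a run of an $n$-DPDA, with $|R|\ge1$, that is not $(k-1)$-upper. Suppose that there exists an index $j\in\{0,\dots,|R|-1\}$ such that $R[j,|R|]$ is $k$-upper, and that for the greatest such index $j$ the run $R[0,j]$ is $(k-1)$-upper. Then $R$ is a $k$-return.
   Context: Stacks: fix order $n\ge1$, finite stack alphabet $\Gamma$. A $0$-stack is $(\gamma,x)$ with $\gamma\in\Gamma$, $x=(x_n,\dots,x_1)$ a vector of $n$ positive integers (position). For $k\in\{1,\dots,n\}$ a $k$-stack is a finite list $[s_1,\dots,s_m]$ ($m\ge0$) of nonempty $(k-1)$-stacks such that for some $x_n,\dots,x_{k+1}$, every position in $s_i$ has the form $(x_n,\dots,x_{k+1},i,y_{k-1},\dots,y_1)$. The top is at the right; $s^k:s^{k-1}$ appends at the top (right-associative); for $s^r=t^r:t^{r-1}:\dots:t^k$, $\mathrm{top}^k(s^r)=t^k$. Equality of stacks includes positions. For $k<n$, $\mathsf p_{+1}(s^k)$ adds $1$ to the $(n-k)$-th coordinate of all positions. Operations of order $k\ge1$: $\mathsf{pop}^k(s^r:\dots:s^k:s^{k-1})=s^r:\dots:s^k$, defined only if the topmost $k$-stack has at least two $(k-1)$-stacks; $\mathsf{push}^k_\gamma(s^r:\dots:s^0)=s^r:\dots:s^{k+1}:(s^k:\dots:s^0):\mathsf p_{+1}(s^{k-1}:\dots:s^1:(\gamma,x))$ where $s^0=(\gamma',x)$. An $n$-DPDA has transitions determined by state and topmost stack symbol, each either $\mathrm{read}(\vec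 q)$ ($\vec q:A\to Q$ injective; leads to $(\vec q(a),s)$, reading $a$) or $(q,op)$ with $op$ a stack operation of order $\le n$ (leads to $(q,op(s))$ if defined). Configurations are (state, nonempty $n$-stack). A run is a finite sequence $R=c_0,\dots,c_m$ with each $c_i$ a successor of $c_{i-1}$; $R(i)=c_i$, $|R|=m$, $R[i,j]=c_i,\dots,c_j$. $\mathrm{top}^k(c)$, $\mathsf{pop}^k(c)$ refer to the stack of $c$. History: for a run $R$ and a $0$-stack $s^0$ of $R(|R|)$, $\mathrm{hist}(R,s^0)$ is a $0$-stack of $R(0)$: if $|R|=0$ it is $s^0$; if $R=S\circ T$, $|T|=1$, and the last step is a read or a $\mathsf{pop}$, or a $\mathsf{push}^r_\gamma$ with $s^0$ not in the topmost $(r-1)$-stack of $R(|R|)$, it is $\mathrm{hist}(S,s^0)$; if the last step is $\mathsf{push}^r_\gamma$ and $s^0$ is in the topmost $(r-1)$-stack of $R(|R|)$, it is $\mathrm{hist}(S,t^0)$ with $t^0$ equal to $s^0$ with the $(n-r+1)$-th position coordinate decreased by $1$. For a $k$-stack $s^k$ of $R(|R|)$, $k\ge1$, $\mathrm{hist}(R,s^k)$ is the $k$-stack of $R(0)$ containing $\mathrm{hist}(R,s^0)$ for all $0$-stacks $s^0$ of $s^k$. For $k\in\{0,\dots,n\}$, $R$ is $k$-upper if $\mathrm{hist}(R,\mathrm{top}^k(R(|R|)))=\mathrm{top}^k(R(0))$. For $k\in\{1,\dots,n\}$, $R$ is a $k$-return if $\mathrm{hist}(R,\mathrm{top}^{k-1}(R(|R|)))=\mathrm{top}^{k-1}(\mathsf{pop}^k(R(0)))$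 and $R[i,|R|]$ is not $(k-1)$-upper for every $i\in\{0,\dots,|R|-1\}$. *)

theory Defs
  imports Main
begin

text \<open>A stack of order 0 is Z gamma x (symbol and position vector x = [x_n,...,x_1]);
  a k-stack (k >= 1) is L [s_1,...,s_m], the top being the last list element.\<close>

datatype 'g stk = Z 'g "nat list" | L "'g stk list"

fun positions :: "'g stk \<Rightarrow> nat list set" where
  "positions (Z g x) = {x}"
| "positions (L l) = (\<Union>t\<in>set l. positions t)"

fun wf_stk :: "nat \<Rightarrow> nat \<Rightarrow> 'g stk \<Rightarrow> bool" where
  "wf_stk n 0 (Z g x) = (length x = n \<and> (\<forall>i\<in>set x. 0 < i))"
| "wf_stk n 0 (L l) = False"
| "wf_stk n (Suc k) (Z g x) = False"
| "wf_stk n (Suc k) (L l) =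
     ((\<forall>t\<in>set l. wf_stk n k t \<and> t \<noteq> L []) \<and>
      (\<exists>p. length p = n - Suc k \<and>
           (\<forall>i<length l. \<forall>x\<in>positions (l ! i). \<exists>y. x = p @ [Suc i] @ y)))"

fun sym :: "'g stk \<Rightarrow> 'g" where
  "sym (Z g x) = g"
| "sym (L l) = undefined"

text \<open>top_sub d s: the topmost substack d levels below s; for an n-stack s,
  top^k(s) = top_sub (n - k) s.\<close>
fun top_sub :: "nat \<Rightarrow> 'g stk \<Rightarrow> 'g stk" where
  "top_sub 0 s = s"
| "top_sub (Suc d) (L l) = (if l = [] then L [] else top_sub d (last l))"
| "top_sub (Suc d) (Z g x) = Z g x"

fun map_top :: "nat \<Rightarrow> ('g stk \<Rightarrow> 'g stk) \<Rightarrow> 'g stk \<Rightarrow> 'g stk" where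
  "map_top 0 f s = f s"
| "map_top (Suc d) f (L l) = (if l = [] then L l else L (butlast l @ [map_top d f (last l)]))"
| "map_top (Suc d) f (Z g x) = Z g x"

fun map_pos :: "(nat list \<Rightarrow> nat list) \<Rightarrow> 'g stk \<Rightarrow> 'g stk" where
  "map_pos f (Z g x) = Z g (f x)"
| "map_pos f (L l) = L (map (map_pos f) l)"

text \<open>p_{+1} on a j-stack (j < n): add 1 to the (n-j)-th coordinate (1-based) of all positions.\<close>
definition pplus :: "nat \<Rightarrow> nat \<Rightarrow> 'g stk \<Rightarrow> 'g stk" where
  "pplus n j s = map_pos (\<lambda>x. x[n - j - 1 := x ! (n - j - 1) + 1]) s"

definition set_sym :: "'g \<Rightarrow> 'g stk \<Rightarrow> 'g stk" where
  "set_sym \<gamma> t = (case t of Z g x \<Rightarrow> Z \<gamma> x | L l \<Rightarrow> L l)"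

definition pop :: "nat \<Rightarrow> nat \<Rightarrow> 'g stk \<Rightarrow> 'g stk option" where
  "pop n k s = (case top_sub (n - k) s of
      L l \<Rightarrow> if 2 \<le> length l
             then Some (map_top (n - k) (\<lambda>t. case t of L l' \<Rightarrow> L (butlast l') | Z g x \<Rightarrow> Z g x) s)
             else None
    | Z g x \<Rightarrow> None)"

definition push :: "nat \<Rightarrow> nat \<Rightarrow> 'g \<Rightarrow> 'g stk \<Rightarrow> 'g stk option" where
  "push n k \<gamma> s = (case top_sub (n - k) s of
      L l \<Rightarrow> if l \<noteq> []
             then Some (map_top (n - k)
                    (\<lambda>t. case t of
                        L l' \<Rightarrow> L (l' @ [pplus n (k - 1) (map_top (k - 1) (set_sym \<gamma>) (last l'))])
                      | Z g x \<Rightarrow> Z g x) s)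
             else None
    | Z g x \<Rightarrow> None)"

datatype 'g op = Pop nat | Push nat 'g

fun order :: "'g op \<Rightarrow> nat" where
  "order (Pop k) = k"
| "order (Push k g) = k"

datatype ('q, 'a, 'g) tr = Read "'a \<Rightarrow> 'q" | Op 'q "'g op"

type_synonym ('q, 'g) config = "'q \<times> 'g stk"

definition dpda :: "nat \<Rightarrow> ('q \<Rightarrow> 'g \<Rightarrow> ('q, 'a, 'g) tr option) \<Rightarrow> bool" where
  "dpda n \<delta> =
     ((\<forall>q g f. \<delta> q g = Some (Read f) \<longrightarrow> inj f) \<and>
      (\<forall>q g q' p. \<delta> q g = Some (Op q' p) \<longrightarrow> 1 \<le> order p \<and> order p \<le> n))"

fun op_app :: "nat \<Rightarrow> 'g op \<Rightarrow> 'g stk \<Rightarrow> 'g stk option" where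
  "op_app n (Pop k) s = pop n k s"
| "op_app n (Push k \<gamma>) s = push n k \<gamma> s"

definition topsym :: "nat \<Rightarrow> 'g stk \<Rightarrow> 'g" where
  "topsym n s = sym (top_sub n s)"

definition valid_config :: "nat \<Rightarrow> ('q, 'g) config \<Rightarrow> bool" where
  "valid_config n c = (wf_stk n n (snd c) \<and> snd c \<noteq> L [])"

definition succ :: "nat \<Rightarrow> ('q \<Rightarrow> 'g \<Rightarrow> ('q, 'a, 'g) tr option) \<Rightarrow> ('q, 'g) config \<Rightarrow> ('q, 'g) config \<Rightarrow> bool" where
  "succ n \<delta> c c' =
     (case \<delta> (fst c) (topsym n (snd c)) of
        None \<Rightarrow> False
      | Some (Read f) \<Rightarrow> (\<exists>a. c' = (f a, snd c))
      | Some (Op q p) \<Rightarrow> (\<exists>s'. op_app n p (snd c) = Some s' \<and> c' = (q, s')))"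

text \<open>A run c_0,...,c_m is a nonempty list; |R| = length R - 1.\<close>
definition run :: "nat \<Rightarrow> ('q \<Rightarrow> 'g \<Rightarrow> ('q, 'a, 'g) tr option) \<Rightarrow> ('q, 'g) config list \<Rightarrow> bool" where
  "run n \<delta> R =
     (R \<noteq> [] \<and> (\<forall>c\<in>set R. valid_config n c) \<and>
      (\<forall>i. i + 1 < length R \<longrightarrow> succ n \<delta> (R ! i) (R ! (i + 1))))"

text \<open>R[i,j] = c_i,...,c_j\<close>
definition sub :: "'c list \<Rightarrow> nat \<Rightarrow> nat \<Rightarrow> 'c list" where
  "sub R i j = drop i (take (Suc j) R)"

text \<open>0-stacks of a stack are identified by their (unique) positions.
  One backward history step along the step from c to c'.\<close>
definition hist_step :: "nat \<Rightarrow> ('q \<Rightarrow> 'g \<Rightarrow> ('q, 'a, 'g) tr option) \<Rightarrow>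
    ('q, 'g) config \<Rightarrow> ('q, 'g) config \<Rightarrow> nat list \<Rightarrow> nat list" where
  "hist_step n \<delta> c c' x =
     (case \<delta> (fst c) (topsym n (snd c)) of
        Some (Op q (Push r \<gamma>)) \<Rightarrow>
          if x \<in> positions (top_sub (n - (r - 1)) (snd c'))
          then x[n - r := x ! (n - r) - 1] else x
      | _ \<Rightarrow> x)"

fun hist_rev :: "nat \<Rightarrow> ('q \<Rightarrow> 'g \<Rightarrow> ('q, 'a, 'g) tr option) \<Rightarrow>
    ('q, 'g) config list \<Rightarrow> nat list \<Rightarrow> nat list" where
  "hist_rev n \<delta> [] x = x"
| "hist_rev n \<delta> [c] x = x"
| "hist_rev n \<delta> (c' # c # cs) x = hist_rev n \<delta> (c # cs) (hist_step n \<delta> c c' x)"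

text \<open>hist(R, s^0) for the 0-stack of R(|R|) at position x: position of a 0-stack of R(0).\<close>
definition hist :: "nat \<Rightarrow> ('q \<Rightarrow> 'g \<Rightarrow> ('q, 'a, 'g) tr option) \<Rightarrow>
    ('q, 'g) config list \<Rightarrow> nat list \<Rightarrow> nat list" where
  "hist n \<delta> R x = hist_rev n \<delta> (rev R) x"

text \<open>R is k-upper: hist(R, top^k(R(|R|))) = top^k(R(0)), i.e. the k-stack of R(0)
  containing the histories of all 0-stacks of top^k(R(|R|)) is top^k(R(0)).\<close>
definition upper :: "nat \<Rightarrow> ('q \<Rightarrow> 'g \<Rightarrow> ('q, 'a, 'g) tr option) \<Rightarrow> nat \<Rightarrow>
    ('q, 'g) config list \<Rightarrow> bool" where
  "upper n \<delta> k R =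
     (\<forall>x\<in>positions (top_sub (n - k) (snd (last R))).
        hist n \<delta> R x \<in> positions (top_sub (n - k) (snd (hd R))))"

definition kreturn :: "nat \<Rightarrow> ('q \<Rightarrow> 'g \<Rightarrow> ('q, 'a, 'g) tr option) \<Rightarrow> nat \<Rightarrow>
    ('q, 'g) config list \<Rightarrow> bool" where
  "kreturn n \<delta> k R =
     ((\<exists>s'. pop n k (snd (hd R)) = Some s' \<and>
        (\<forall>x\<in>positions (top_sub (n - (k - 1)) (snd (last R))).
           hist n \<delta> R x \<in> positions (top_sub (n - (k - 1)) s'))) \<and>
      (\<forall>i<length R - 1. \<not> upper n \<delta> (k - 1) (sub R i (length R - 1))))"

end

theory Submission
  imports Defs
begin

text \<open>
  A \<open>0\<close>-stack is identified with its position, and \<open>top\<^sup>k\<close> of a stack consists of the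
  positions that share their first \<open>n - k\<close> coordinates with the top position. Hence a run
  is \<open>k\<close>-upper iff the history of the final top position agrees with the initial top
  position on these coordinates, and upper runs compose and cancel.

  Let \<open>m = |R|\<close> and let \<open>j\<close> be the greatest index with \<open>R[j,m]\<close> \<open>k\<close>-upper. Going back from
  \<open>m\<close>, the history of the top position stays maximal in coordinate \<open>n - k\<close> among the
  positions with the same prefix, unless two consecutive suffixes are \<open>k\<close>-upper. So if
  \<open>j < m - 1\<close>, the history at \<open>j\<close> agrees with the top position of \<open>R(j)\<close> also in coordinate
  \<open>n - k\<close>, so \<open>R[j,m]\<close> is \<open>(k-1)\<close>-upper and, composed with \<open>R[0,j]\<close>, so is \<open>R\<close>. Thus \<open>j = m - 1\<close> and the last step is a
  \<open>pop\<^sup>k\<close>. Tracing the two top positions of this step back to \<open>R(0)\<close>, their histories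
  differ by exactly one in coordinate \<open>n - k\<close>; this places the history of
  \<open>top\<^sup>k\<^sup>-\<^sup>1(R(m))\<close> in \<open>top\<^sup>k\<^sup>-\<^sup>1(pop\<^sup>k(R(0)))\<close> and rules out \<open>(k-1)\<close>-upper suffixes.
\<close>

function top_pos :: "'g stk \<Rightarrow> nat list" where
  "top_pos (Z g x) = x"
| "top_pos (L l) = (if l = [] then [] else top_pos (last l))"
  by pat_completeness auto
termination
  apply (relation "measure size")
   apply simp
  apply (simp add: less_Suc_eq_le)
  apply (rule size_list_estimation'[OF last_in_set])
   apply auto
  done

lemma take_eq_take_le: "m \<le> d \<Longrightarrow> take d x = take d y \<Longrightarrow> take m x = take m y"
  by (metis min.absorb1 take_take)

lemma nth_eq_of_take_eq: "i < d \<Longrightarrow> take d x = take d y \<Longrightarrow> x ! i = y ! i"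
  by (metis nth_take)

lemma take_Suc_eq_iff:
  "a < length x \<Longrightarrow> a < length y \<Longrightarrow> take (Suc a) x = take (Suc a) y \<longleftrightarrow> take a x = take a y \<and> x ! a = y ! a"
  by (simp add: take_Suc_conv_app_nth)

lemma set_conv_butlast_last: "l \<noteq> [] \<Longrightarrow> set l = insert (last l) (set (butlast l))"
  by (induction l) auto

subsection \<open>Positions in well-formed stacks\<close>

lemma wf_stk_positions_length:
  "wf_stk n k s \<Longrightarrow> x \<in> positions s \<Longrightarrow> length x = n \<and> (\<forall>i\<in>set x. 0 < i)"
  by (induction n k s rule: wf_stk.induct) auto

lemma wf_stk_top_pos_mem: "wf_stk n k s \<Longrightarrow> s \<noteq> L [] \<Longrightarrow> top_pos s \<in> positions s"
proof (induction n k s rule: wf_stk.induct)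
  case (4 n k l)
  then have "l \<noteq> []" by auto
  with 4 show ?case by (auto intro!: bexI[of _ "last l"])
qed auto

lemma wf_stk_position_index:
  assumes "wf_stk n (Suc k) (L l)" "i < length l" "x \<in> positions (l ! i)"
  shows "x ! (n - Suc k) = Suc i"
proof -
  from assms(1) obtain p where "length p = n - Suc k"
    "\<forall>i<length l. \<forall>x\<in>positions (l ! i). \<exists>y. x = p @ [Suc i] @ y" by auto
  with assms(2,3) obtain y where "x = p @ [Suc i] @ y" "length p = n - Suc k" by blast
  then show ?thesis by (simp add: nth_append)
qed

lemma wf_stk_positions_prefix:
  assumes "wf_stk n k s" "k \<le> n" "x \<in> positions s" "y \<in> positions s"
  shows "take (n - k) x = take (n - k) y"
proof (cases k)
  case 0
  with assms show ?thesis by (cases s) auto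
next
  case (Suc k')
  with assms obtain l where s: "s = L l" by (cases s) auto
  with assms Suc obtain p where p: "length p = n - Suc k'"
    "\<forall>i<length l. \<forall>x\<in>positions (l ! i). \<exists>y. x = p @ [Suc i] @ y" by auto
  have "take (n - k) z = p" if "z \<in> positions s" for z
  proof -
    from that s obtain i where "i < length l" "z \<in> positions (l ! i)" by (auto simp: in_set_conv_nth)
    with p obtain y where "z = p @ [Suc i] @ y" by blast
    with p Suc show ?thesis by simp
  qed
  with assms show ?thesis by simp
qed

lemma top_sub_L_Nil: "top_sub d (L []) = L []"
  by (cases d) auto

lemma top_sub_Z [simp]: "top_sub d (Z g x) = Z g x"
  by (cases d) auto

lemma top_sub_add: "top_sub (a + b) s = top_sub b (top_sub a s)"
proof (induction a arbitrary: s)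
  case (Suc a)
  then show ?case by (cases s) (auto simp: top_sub_L_Nil)
qed simp

lemma positions_top_sub_subset: "positions (top_sub d s) \<subseteq> positions s"
proof (induction d arbitrary: s)
  case (Suc d)
  show ?case
  proof (cases s)
    case (L l)
    with Suc[of "last l"] last_in_set[of l] show ?thesis by (cases "l = []") fastforce+
  qed simp
qed simp

lemma wf_stk_top_sub:
  assumes "wf_stk n k s" "s \<noteq> L []" "d \<le> k"
  shows "wf_stk n (k - d) (top_sub d s) \<and> top_sub d s \<noteq> L [] \<and> top_pos (top_sub d s) = top_pos s"
  using assms
proof (induction d arbitrary: k s)
  case (Suc d)
  obtain k' where k: "k = Suc k'" using Suc.prems by (cases k) auto
  with Suc.prems obtain l where s: "s = L l" by (cases s) auto
  with Suc.prems have l: "l \<noteq> []" by auto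
  with Suc.prems k s have "wf_stk n k' (last l)" "last l \<noteq> L []" by auto
  from Suc.IH[OF this] Suc.prems k have
    "wf_stk n (k' - d) (top_sub d (last l)) \<and> top_sub d (last l) \<noteq> L [] \<and>
     top_pos (top_sub d (last l)) = top_pos (last l)" by simp
  then show ?case using s l k by simp
qed simp

lemma positions_top_sub_wf:
  assumes "wf_stk n k s" "k \<le> n" "s \<noteq> L []" "d \<le> k"
  shows "positions (top_sub d s) = {x \<in> positions s. take (n - k + d) x = take (n - k + d) (top_pos s)}"
  using assms
proof (induction d arbitrary: k s)
  case 0
  have "top_pos s \<in> positions s" using wf_stk_top_pos_mem[OF 0(1,3)] .
  then have "\<And>x. x \<in> positions s \<Longrightarrow> take (n - k) x = take (n - k) (top_pos s)"
    using wf_stk_positions_prefix[OF 0(1,2)] by blast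
  then show ?case by auto
next
  case (Suc d)
  obtain k' where k: "k = Suc k'" using Suc.prems by (cases k) auto
  with Suc.prems obtain l where s: "s = L l" by (cases s) auto
  with Suc.prems have l: "l \<noteq> []" by auto
  with Suc.prems k s have w: "wf_stk n k' (last l)" "last l \<noteq> L []" and ws: "wf_stk n (Suc k') (L l)"
    by auto
  have IH: "positions (top_sub d (last l))
      = {x \<in> positions (last l). take (n - k' + d) x = take (n - k' + d) (top_pos (last l))}"
    using Suc.IH[OF w(1) _ w(2)] Suc.prems k by simp
  have e: "n - k' + d = n - k + Suc d" using Suc.prems k by simp
  have top_index: "top_pos (last l) ! (n - Suc k') = length l"
    using wf_stk_position_index[OF ws, of "length l - 1"] wf_stk_top_pos_mem[OF w] l
    by (simp add: last_conv_nth)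
  have "x \<in> positions (last l)"
    if "x \<in> positions (L l)" "take (n - k + Suc d) x = take (n - k + Suc d) (top_pos (last l))" for x
  proof -
    from that obtain i where i: "i < length l" "x \<in> positions (l ! i)" by (auto simp: in_set_conv_nth)
    have "n - Suc k' < n - k + Suc d" using Suc.prems k by simp
    then have "x ! (n - Suc k') = top_pos (last l) ! (n - Suc k')"
      using nth_eq_of_take_eq[OF _ that(2)] by blast
    with wf_stk_position_index[OF ws i] top_index have "i = length l - 1" by simp
    with i l show ?thesis by (simp add: last_conv_nth)
  qed
  moreover have "positions (last l) \<subseteq> positions (L l)" using last_in_set[OF l] by auto
  ultimately have "positions (top_sub d (last l))
      = {x \<in> positions (L l). take (n - k + Suc d) x = take (n - k + Suc d) (top_pos (last l))}"
    unfolding IH e by blast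
  then show ?case using s l by simp
qed

definition nstack :: "nat \<Rightarrow> 'g stk \<Rightarrow> bool" where
  "nstack n s \<longleftrightarrow> wf_stk n n s \<and> s \<noteq> L []"

lemma positions_top_sub:
  "nstack n s \<Longrightarrow> d \<le> n \<Longrightarrow> positions (top_sub d s) = {x \<in> positions s. take d x = take d (top_pos s)}"
  unfolding nstack_def using positions_top_sub_wf[of n n s d] by simp

lemma nstack_top_pos_mem: "nstack n s \<Longrightarrow> top_pos s \<in> positions s"
  unfolding nstack_def using wf_stk_top_pos_mem by blast

lemma nstack_positions_length:
  "nstack n s \<Longrightarrow> x \<in> positions s \<Longrightarrow> length x = n \<and> (\<forall>i\<in>set x. 0 < i)"
  unfolding nstack_def using wf_stk_positions_length by blast

lemma nstack_top_sub_L: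
  assumes "nstack n s" "a < n"
  obtains l where "top_sub a s = L l" "l \<noteq> []" "wf_stk n (n - a) (L l)" "top_pos s ! a = length l"
    "\<forall>x\<in>positions s. take a x = take a (top_pos s) \<longrightarrow> (\<exists>i<length l. x \<in> positions (l ! i) \<and> x ! a = Suc i)"
proof -
  have T: "wf_stk n (n - a) (top_sub a s)" "top_sub a s \<noteq> L []" "top_pos (top_sub a s) = top_pos s"
    using wf_stk_top_sub[of n n s a] assms unfolding nstack_def by auto
  obtain m where m: "n - a = Suc m" using assms by (cases "n - a") auto
  then obtain l where l: "top_sub a s = L l" using T(1) by (cases "top_sub a s") auto
  have ln: "l \<noteq> []" using T(2) l by simp
  have ws: "wf_stk n (Suc m) (L l)" using T(1) l m by simp
  have am: "n - Suc m = a" using m assms by simp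
  have "top_pos (last l) \<in> positions (last l)" using wf_stk_top_pos_mem[of n m "last l"] ws ln by simp
  then have top: "top_pos s ! a = length l"
    using wf_stk_position_index[OF ws, of "length l - 1"] T(3) l am ln by (simp add: last_conv_nth)
  have index: "\<exists>i<length l. x \<in> positions (l ! i) \<and> x ! a = Suc i"
    if "x \<in> positions s" "take a x = take a (top_pos s)" for x
  proof -
    have "x \<in> positions (top_sub a s)" using positions_top_sub[OF assms(1), of a] assms that by simp
    then obtain i where i: "i < length l" "x \<in> positions (l ! i)" using l by (auto simp: in_set_conv_nth)
    with wf_stk_position_index[OF ws i] am show ?thesis by auto
  qed
  show ?thesis using l ln ws m top index by (intro that) auto
qed

lemma position_le_top_pos:
  assumes "nstack n s" "a < n" "x \<in> positions s" "take a x = take a (top_pos s)"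
  shows "x ! a \<le> top_pos s ! a"
proof -
  obtain l where "top_sub a s = L l" "l \<noteq> []" "wf_stk n (n - a) (L l)"
    and top: "top_pos s ! a = length l"
    and index: "\<forall>x\<in>positions s. take a x = take a (top_pos s) \<longrightarrow>
      (\<exists>i<length l. x \<in> positions (l ! i) \<and> x ! a = Suc i)"
    by (rule nstack_top_sub_L[OF assms(1,2)])
  from index assms(3,4) obtain i where "i < length l" "x ! a = Suc i" by blast
  with top show ?thesis by simp
qed

lemma positions_map_top_subset: "positions (map_top d f s) \<subseteq> positions s \<union> positions (f (top_sub d s))"
proof (induction d arbitrary: s)
  case (Suc d)
  show ?case
  proof (cases s)
    case (L l)
    show ?thesis
    proof (cases "l = []")
      case False
      have e: "positions (map_top (Suc d) f s) = (\<Union>t\<in>set (butlast l). positions t) \<union> positions (map_top d f (last l))"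
        using L False by (simp add: Un_commute)
      have b1: "(\<Union>t\<in>set (butlast l). positions t) \<subseteq> positions s" using L by (auto dest: in_set_butlastD)
      have b2: "positions (last l) \<subseteq> positions s" using L set_conv_butlast_last[OF False] by auto
      have ts: "top_sub (Suc d) s = top_sub d (last l)" using L False by simp
      have IH: "positions (map_top d f (last l)) \<subseteq> positions (last l) \<union> positions (f (top_sub d (last l)))"
        by (rule Suc.IH)
      show ?thesis unfolding e ts using IH b1 b2 by blast
    qed (simp add: L)
  qed simp
qed simp

lemma positions_diff_map_top: "positions s - positions (map_top d f s) \<subseteq> positions (top_sub d s) - positions (f (top_sub d s))"
proof (induction d arbitrary: s)
  case (Suc d)
  show ?case
  proof (cases s)
    case (L l)
    show ?thesis
    proof (cases "l = []")
      case False
      have e: "positions (map_top (Suc d) f s) = (\<Union>t\<in>set (butlast l). positions t) \<union> positions (map_top d f (last l))"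
        using L False by (simp add: Un_commute)
      have ps: "positions s = (\<Union>t\<in>set (butlast l). positions t) \<union> positions (last l)"
        using L set_conv_butlast_last[OF False] by auto
      have "top_sub (Suc d) s = top_sub d (last l)" using L False by simp
      then show ?thesis using Suc.IH[of "last l"] e ps by auto
    qed (simp add: L)
  qed simp
qed simp

lemma top_sub_map_top:
  "wf_stk n k s \<Longrightarrow> s \<noteq> L [] \<Longrightarrow> d \<le> k \<Longrightarrow>
   top_sub d (map_top d f s) = f (top_sub d s)"
proof (induction d arbitrary: k s)
  case (Suc d)
  obtain k' where k: "k = Suc k'" using Suc.prems by (cases k) auto
  with Suc.prems obtain l where s: "s = L l" by (cases s) auto
  with Suc.prems have l: "l \<noteq> []" by auto
  then have ll: "last l \<in> set l" by simp
  with Suc.prems k s have w: "wf_stk n k' (last l)" "last l \<noteq> L []" by auto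
  have "top_sub d (map_top d f (last l)) = f (top_sub d (last l))" using Suc.IH[OF w] Suc.prems k by simp
  then show ?case using s l by simp
qed simp

lemma top_pos_map_top:
  "wf_stk n k s \<Longrightarrow> s \<noteq> L [] \<Longrightarrow> d \<le> k \<Longrightarrow>
   top_pos (map_top d f s) = top_pos (f (top_sub d s))"
proof (induction d arbitrary: k s)
  case (Suc d)
  obtain k' where k: "k = Suc k'" using Suc.prems by (cases k) auto
  with Suc.prems obtain l where s: "s = L l" by (cases s) auto
  with Suc.prems have l: "l \<noteq> []" by auto
  then have ll: "last l \<in> set l" by simp
  with Suc.prems k s have w: "wf_stk n k' (last l)" "last l \<noteq> L []" by auto
  have "top_pos (map_top d f (last l)) = top_pos (f (top_sub d (last l)))" using Suc.IH[OF w] Suc.prems k by simp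
  then show ?case using s l by simp
qed simp

lemma positions_map_pos: "positions (map_pos f t) = f ` positions t"
  by (induction t) auto

subsection \<open>Pop and push\<close>

definition max_at :: "'g stk \<Rightarrow> nat \<Rightarrow> nat list \<Rightarrow> bool" where
  "max_at s a w = (\<forall>z\<in>positions s. take a z = take a w \<longrightarrow> z!a \<le> w!a)"

definition pop_top :: "'g stk \<Rightarrow> 'g stk" where
  "pop_top t = (case t of L l' \<Rightarrow> L (butlast l') | Z g x \<Rightarrow> Z g x)"

lemma pop_SomeD:
  "pop n r s = Some s' \<Longrightarrow>
   \<exists>l. top_sub (n-r) s = L l \<and> 2 \<le> length l \<and> s' = map_top (n-r) pop_top s"
  unfolding pop_def pop_top_def by (auto split: stk.splits if_splits)

lemma pop_top_L[simp]: "pop_top (L l) = L (butlast l)" by (simp add: pop_top_def)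

lemma pop_defined: assumes "nstack n s" "a < n" "2 \<le> top_pos s ! a"
  shows "\<exists>s'. pop n (n-a) s = Some s'"
proof -
  obtain l where "top_sub a s = L l" "top_pos s ! a = length l"
    by (rule nstack_top_sub_L[OF assms(1,2)])
  then show ?thesis using assms unfolding pop_def by auto
qed

locale pop_step =
  fixes n r :: nat and s s' :: "'g stk" and l
  assumes nstack_s: "nstack n s" and r1: "1 \<le> r" and rn: "r \<le> n" and pop_s: "pop n r s = Some s'"
    and tl: "top_sub (n-r) s = L l" and l2: "2 \<le> length l" and s': "s' = map_top (n-r) pop_top s"
begin

lemma level_less: "n - r < n" using r1 rn by simp

lemma wf_s: "wf_stk n n s" "s \<noteq> L []" using nstack_s unfolding nstack_def by auto

lemma top_list: "wf_stk n r (L l)" "top_pos s ! (n-r) = length l"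
  "\<And>x. x \<in> positions s \<Longrightarrow> take (n-r) x = take (n-r) (top_pos s) \<Longrightarrow> \<exists>i<length l. x \<in> positions (l!i) \<and> x!(n-r) = Suc i"
proof -
  obtain l0 where "top_sub (n-r) s = L l0" "wf_stk n (n-(n-r)) (L l0)" "top_pos s ! (n-r) = length l0"
    "\<forall>x\<in>positions s. take (n-r) x = take (n-r) (top_pos s) \<longrightarrow> (\<exists>i<length l0. x \<in> positions (l0!i) \<and> x!(n-r) = Suc i)"
    by (rule nstack_top_sub_L[OF nstack_s level_less])
  with tl rn show "wf_stk n r (L l)" "top_pos s ! (n-r) = length l"
    "\<And>x. x \<in> positions s \<Longrightarrow> take (n-r) x = take (n-r) (top_pos s) \<Longrightarrow> \<exists>i<length l. x \<in> positions (l!i) \<and> x!(n-r) = Suc i"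
    by auto
qed

lemma positions_top_list: "positions (L l) \<subseteq> positions s"
  using positions_top_sub_subset[of "n-r" s] tl by simp

lemma positions_pop_subset: "positions s' \<subseteq> positions s"
proof -
  have "positions (L (butlast l)) \<subseteq> positions (L l)" by (auto dest: in_set_butlastD)
  moreover have "positions (map_top (n-r) pop_top s) \<subseteq> positions s \<union> positions (pop_top (top_sub (n-r) s))" by (rule positions_map_top_subset)
  then have "positions s' \<subseteq> positions s \<union> positions (L (butlast l))" using s' tl by simp
  ultimately show ?thesis using positions_top_list by blast
qed

lemma butlast_top_list_ne: "butlast l \<noteq> []" using l2 by (cases l rule: rev_cases) auto

lemma top_sub_Suc: "top_sub (Suc (n-r)) s = last l"
  using top_sub_add[of "n-r" 1 s] tl l2 by auto

lemma popped_position_prefix: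
  "x \<in> positions s \<Longrightarrow> x \<notin> positions s' \<Longrightarrow>
   take (Suc (n-r)) x = take (Suc (n-r)) (top_pos s)"
proof -
  assume x: "x \<in> positions s" "x \<notin> positions s'"
  have "x \<in> positions (L l) - positions (L (butlast l))" using positions_diff_map_top[of s "n-r" pop_top] s' tl x by auto
  moreover have "l \<noteq> []" using l2 by auto
  ultimately have "x \<in> positions (last l)" using set_conv_butlast_last by fastforce
  then have "x \<in> positions (top_sub (Suc (n-r)) s)" using top_sub_Suc by simp
  then show ?thesis using positions_top_sub[OF nstack_s, of "Suc (n-r)"] level_less by auto
qed

lemma last_butlast_top_list: "last (butlast l) = l ! (length l - 2)"
proof -
  have "last (butlast l) = butlast l ! (length (butlast l) - 1)" using butlast_top_list_ne by (simp add: last_conv_nth)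
  also have "\<dots> = l ! (length l - 2)" using l2 by (simp add: nth_butlast numeral_2_eq_2)
  finally show ?thesis .
qed

lemma top_pos_pop: "top_pos s' = top_pos (l ! (length l - 2))"
proof -
  have "top_pos s' = top_pos (pop_top (L l))" using top_pos_map_top[OF wf_s, of "n-r" pop_top] s' tl by simp
  also have "\<dots> = top_pos (last (butlast l))" using butlast_top_list_ne by simp
  finally show ?thesis using last_butlast_top_list by simp
qed

lemma top_pos_pop_mem: "top_pos s' \<in> positions (l ! (length l - 2))" and top_pos_pop_index: "top_pos s' ! (n-r) = length l - 1"
proof -
  obtain r' where r': "r = Suc r'" using r1 by (cases r) auto
  have mem: "l ! (length l - 2) \<in> set l" using l2 by simp
  have w: "wf_stk n r' (l ! (length l - 2))" "l ! (length l - 2) \<noteq> L []"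
    using top_list(1) r' mem by auto
  show t: "top_pos s' \<in> positions (l ! (length l - 2))" using wf_stk_top_pos_mem[OF w] top_pos_pop by simp
  have "top_pos s' ! (n - Suc r') = Suc (length l - 2)"
    using wf_stk_position_index[of n r' l "length l - 2"] top_list(1) r' l2 t by simp
  then show "top_pos s' ! (n-r) = length l - 1" using r' l2 by simp
qed

lemma top_pos_pop_prefix: "take (n-r) (top_pos s') = take (n-r) (top_pos s)"
proof -
  have "top_pos s' \<in> positions (L l)" using top_pos_pop_mem l2 by (auto intro!: bexI[of _ "l ! (length l - 2)"])
  then have "top_pos s' \<in> positions (top_sub (n-r) s)" using tl by simp
  then show ?thesis using positions_top_sub[OF nstack_s, of "n-r"] by auto
qed

lemma top_pos_pop_nth: "top_pos s' ! (n-r) = top_pos s ! (n-r) - 1" "2 \<le> top_pos s ! (n-r)"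
  using top_pos_pop_index top_list(2) l2 by auto

lemma pop_position_not_top_prefix:
  "nstack n s' \<Longrightarrow> x \<in> positions s' \<Longrightarrow>
   take (Suc (n-r)) x \<noteq> take (Suc (n-r)) (top_pos s)"
proof
  assume o: "nstack n s'" and x: "x \<in> positions s'" and e: "take (Suc (n-r)) x = take (Suc (n-r)) (top_pos s)"
  have "take (n-r) x = take (n-r) (top_pos s)" using e by (metis min.absorb1 le_SucI order_refl take_take)
  then have "take (n-r) x = take (n-r) (top_pos s')" using top_pos_pop_prefix by simp
  then have "x \<in> positions (top_sub (n-r) s')" using positions_top_sub[OF o, of "n-r"] x by auto
  moreover have "top_sub (n-r) s' = L (butlast l)" using top_sub_map_top[OF wf_s, of "n-r" pop_top] s' tl by simp
  ultimately obtain t where "t \<in> set (butlast l)" "x \<in> positions t" by auto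
  then obtain i where i: "i < length l - 1" "t = l ! i" by (auto simp: in_set_conv_nth nth_butlast)
  then have "x ! (n-r) = Suc i" using wf_stk_position_index[of n "r-1" l i x] top_list(1) r1 \<open>x \<in> positions t\<close> by simp
  moreover have "x ! (n-r) = top_pos s ! (n-r)"
    using e by (metis lessI nth_take)
  ultimately show False using i top_list(2) by simp
qed

lemma mem_top_sub_pop: "x \<in> positions s \<Longrightarrow> take (n-r) x = take (n-r) (top_pos s) \<Longrightarrow> x ! (n-r) = top_pos s ! (n-r) - 1
  \<Longrightarrow> x \<in> positions (top_sub (Suc (n-r)) s')"
proof -
  assume x: "x \<in> positions s" "take (n-r) x = take (n-r) (top_pos s)" "x ! (n-r) = top_pos s ! (n-r) - 1"
  have "top_sub (n-r) s' = L (butlast l)" using top_sub_map_top[OF wf_s, of "n-r" pop_top] s' tl by simp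
  then have "top_sub (Suc (n-r)) s' = last (butlast l)" using top_sub_add[of "n-r" 1 s'] butlast_top_list_ne by simp
  moreover obtain i where "i < length l" "x \<in> positions (l!i)" "x!(n-r) = Suc i" using top_list(3)[OF x(1,2)] by blast
  moreover have "i = length l - 2" using x(3) top_list(2) l2 \<open>x!(n-r) = Suc i\<close> by simp
  ultimately show ?thesis using last_butlast_top_list by simp
qed

lemma pop_max_at: assumes o': "nstack n s'" and a: "a < n" and w: "w \<in> positions s'" and M: "max_at s' a w"
  shows "max_at s a w \<or> (n - r = a \<and> take a w = take a (top_pos s') \<and> take a w = take a (top_pos s))"
proof (cases "n - r = a \<and> take a w = take a (top_pos s')")
  case True
  then show ?thesis using top_pos_pop_prefix by simp
next
  case nt: False
  have "max_at s a w" unfolding max_at_def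
  proof (intro ballI impI)
    fix z assume z: "z \<in> positions s" "take a z = take a w"
    show "z ! a \<le> w ! a"
    proof (cases "z \<in> positions s'")
      case True
      then show ?thesis using M z(2) unfolding max_at_def by blast
    next
      case False
      have pb: "take (Suc (n-r)) z = take (Suc (n-r)) (top_pos s)" using popped_position_prefix[OF z(1) False] .
      consider "n - r < a" | "a < n - r" | "n - r = a" by linarith
      then show ?thesis
      proof cases
        case 1
        have "take (Suc (n-r)) w = take (Suc (n-r)) z" using take_eq_take_le[OF _ z(2)[symmetric]] 1 by simp
        then show ?thesis using pop_position_not_top_prefix[OF o' w] pb by simp
      next
        case 2
        have za: "z!a = top_pos s ! a" using nth_eq_of_take_eq[OF _ pb, of a] 2 by simp
        have pc: "take (n-r) (top_pos s') = take (n-r) (top_pos s)" by (rule top_pos_pop_prefix)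
        have "top_pos s' ! a = top_pos s ! a" using nth_eq_of_take_eq[OF 2 pc] .
        moreover have "take a (top_pos s') = take a (top_pos s)" using take_eq_take_le[OF _ pc, of a] 2 by simp
        moreover have "take a (top_pos s) = take a z" using take_eq_take_le[OF _ pb, of a] 2 by simp
        ultimately have "top_pos s' ! a \<le> w ! a" using M nstack_top_pos_mem[OF o'] z(2) unfolding max_at_def by auto
        then show ?thesis using za \<open>top_pos s' ! a = top_pos s ! a\<close> by simp
      next
        case 3
        have "take a z = take a (top_pos s)" using take_eq_take_le[OF _ pb, of a] 3 by simp
        then have "take a w = take a (top_pos s')" using top_pos_pop_prefix z(2) 3 by simp
        then show ?thesis using nt 3 by simp
      qed
    qed
  qed
  then show ?thesis by simp
qed

end

lemma pop_stepI:
  "nstack n s \<Longrightarrow> 1 \<le> r \<Longrightarrow> r \<le> n \<Longrightarrow>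
   pop n r s = Some s' \<Longrightarrow> \<exists>l. pop_step n r s s' l"
  using pop_SomeD[of n r s s'] unfolding pop_step_def by blast

definition push_top :: "nat \<Rightarrow> nat \<Rightarrow> 'g \<Rightarrow> 'g stk \<Rightarrow> 'g stk" where
  "push_top n r \<gamma> t = (case t of L l' \<Rightarrow> L (l' @ [pplus n (r - 1) (map_top (r - 1) (set_sym \<gamma>) (last l'))]) | Z g x \<Rightarrow> Z g x)"

lemma push_SomeD:
  "push n r \<gamma> s = Some s' \<Longrightarrow>
   \<exists>l. top_sub (n-r) s = L l \<and> l \<noteq> [] \<and> s' = map_top (n-r) (push_top n r \<gamma>) s"
  unfolding push_def push_top_def by (auto split: stk.splits if_splits)

lemma positions_set_sym[simp]: "positions (set_sym g t) = positions t"
  by (cases t) (auto simp: set_sym_def)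

lemma positions_map_top_set_sym: "positions (map_top d (set_sym g) s) = positions s"
  using positions_map_top_subset[of d "set_sym g" s] positions_diff_map_top[of s d "set_sym g"] positions_top_sub_subset[of d s] by auto

locale push_step =
  fixes n r :: nat and \<gamma> :: 'g and s s' :: "'g stk" and l
  assumes nstack_s: "nstack n s" and nstack_s': "nstack n s'" and r1: "1 \<le> r" and rn: "r \<le> n"
    and tl: "top_sub (n-r) s = L l" and lne: "l \<noteq> []" and s': "s' = map_top (n-r) (push_top n r \<gamma>) s"
begin

definition inc :: "nat list \<Rightarrow> nat list" where "inc x = x[n-r := x!(n-r) + 1]"
definition dec :: "nat list \<Rightarrow> nat list" where "dec x = x[n-r := x!(n-r) - 1]"
definition new_top where "new_top = pplus n (r - 1) (map_top (r - 1) (set_sym \<gamma>) (last l))"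

lemma wf_s: "wf_stk n n s" "s \<noteq> L []" using nstack_s unfolding nstack_def by auto

lemma level_less: "n - r < n" using r1 rn by simp

lemma positions_top_list: "positions (L l) \<subseteq> positions s"
  using positions_top_sub_subset[of "n-r" s] tl by simp

lemma push_top_top_list: "push_top n r \<gamma> (L l) = L (l @ [new_top])" unfolding push_top_def new_top_def by simp

lemma positions_push_supset: "positions s \<subseteq> positions s'"
  using positions_diff_map_top[of s "n-r" "push_top n r \<gamma>"] s' tl push_top_top_list by auto

lemma positions_push_subset: "positions s' \<subseteq> positions s \<union> positions new_top"
  using positions_map_top_subset[of "n-r" "push_top n r \<gamma>" s] s' tl push_top_top_list positions_top_list by auto

lemma top_sub_push: "top_sub (Suc (n-r)) s' = new_top"
proof -
  have "top_sub (n-r) s' = L (l @ [new_top])" using top_sub_map_top[OF wf_s, of "n-r" "push_top n r \<gamma>"] s' tl push_top_top_list by simp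
  then show ?thesis using top_sub_add[of "n-r" 1 s'] by simp
qed

lemma top_sub_Suc: "top_sub (Suc (n-r)) s = last l"
  using top_sub_add[of "n-r" 1 s] tl lne by auto

lemma positions_new_top: "positions new_top = inc ` positions (last l)"
proof -
  have e: "n - (r - 1) - 1 = n - r" using r1 rn by simp
  show ?thesis unfolding new_top_def pplus_def positions_map_pos positions_map_top_set_sym e inc_def by simp
qed

lemma mem_top_sub_push_iff:
  "x \<in> positions s' \<Longrightarrow>
   (x \<in> positions (top_sub (Suc (n-r)) s') \<longleftrightarrow> take (Suc (n-r)) x = take (Suc (n-r)) (top_pos s'))"
  using positions_top_sub[OF nstack_s', of "Suc (n-r)"] level_less by auto

lemma positions_last_top_list: "positions (last l) = {x \<in> positions s. take (Suc (n-r)) x = take (Suc (n-r)) (top_pos s)}"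
  using positions_top_sub[OF nstack_s, of "Suc (n-r)"] level_less top_sub_Suc by auto

lemma dec_inc: "x \<in> positions s \<Longrightarrow> dec (inc x) = x"
  using nstack_positions_length[OF nstack_s, of x] level_less unfolding dec_def inc_def by simp

lemma positions_top_sub_push: "positions (top_sub (Suc (n-r)) s') = inc ` positions (last l)"
  using top_sub_push positions_new_top by simp

definition hist_push where "hist_push x = (if x \<in> positions (top_sub (Suc (n-r)) s') then dec x else x)"

lemma mem_top_sub_push_dec:
  "x \<in> positions (top_sub (Suc (n-r)) s') \<Longrightarrow>
   \<exists>y \<in> positions (last l). x = inc y \<and> dec x = y"
proof -
  assume "x \<in> positions (top_sub (Suc (n-r)) s')"
  then obtain y where y: "y \<in> positions (last l)" "x = inc y" using positions_top_sub_push by auto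
  then have "y \<in> positions s" using positions_last_top_list by auto
  then show ?thesis using y dec_inc by auto
qed

lemma length_positions: "x \<in> positions s \<Longrightarrow> length x = n" using nstack_positions_length[OF nstack_s] by blast
lemma length_positions_push: "x \<in> positions s' \<Longrightarrow> length x = n" using nstack_positions_length[OF nstack_s'] by blast

lemma hist_push_mem: "x \<in> positions s' \<Longrightarrow> hist_push x \<in> positions s"
proof (cases "x \<in> positions (top_sub (Suc (n-r)) s')")
  case True
  then obtain y where "y \<in> positions (last l)" "dec x = y" using mem_top_sub_push_dec by blast
  then show ?thesis using True positions_last_top_list unfolding hist_push_def by auto
next
  case False
  assume x: "x \<in> positions s'"
  then have "x \<in> positions s \<or> x \<in> positions new_top" using positions_push_subset by auto
  moreover have "x \<notin> positions new_top" using False top_sub_push by simp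
  ultimately show ?thesis using False unfolding hist_push_def by auto
qed

lemma hist_push_take: assumes "d \<le> n" "x \<in> positions s'" "y \<in> positions s'" "take d x = take d y"
  shows "take d (hist_push x) = take d (hist_push y)"
proof (cases "Suc (n-r) \<le> d")
  case True
  have e: "take (Suc (n-r)) x = take (Suc (n-r)) y" using take_eq_take_le[OF True assms(4)] .
  have mem: "(x \<in> positions (top_sub (Suc (n-r)) s')) = (y \<in> positions (top_sub (Suc (n-r)) s'))"
    using mem_top_sub_push_iff[OF assms(2)] mem_top_sub_push_iff[OF assms(3)] e by simp
  have xy: "x!(n-r) = y!(n-r)" using nth_eq_of_take_eq[OF _ assms(4), of "n-r"] True by simp
  show ?thesis using mem xy assms(4) unfolding hist_push_def dec_def by (simp add: take_update_swap)
next
  case False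
  then have "d \<le> n - r" by simp
  then have "take d (hist_push z) = take d z" for z unfolding hist_push_def dec_def by simp
  then show ?thesis using assms(4) by simp
qed

lemma hist_push_adjacent: assumes "a < n" "x \<in> positions s'" "y \<in> positions s'" "take a x = take a y" "y!a = Suc (x!a)"
  shows "hist_push y ! a = hist_push x ! a \<or> hist_push y ! a = Suc (hist_push x ! a)"
proof (cases "n - r = a")
  case False
  then show ?thesis using assms(5) unfolding hist_push_def dec_def by simp
next
  case True
  have lx: "length x = n" "length y = n" "length (top_pos s') = n" using length_positions_push assms(2,3) nstack_top_pos_mem[OF nstack_s'] by auto
  have mx: "(x \<in> positions (top_sub (Suc (n-r)) s')) = (take a x = take a (top_pos s') \<and> x!a = top_pos s' ! a)"
    using mem_top_sub_push_iff[OF assms(2)] take_Suc_eq_iff[of a x "top_pos s'"] lx assms(1) True by simp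
  have c3: "take a y = take a (top_pos s') \<Longrightarrow> y!a \<le> top_pos s' ! a" using position_le_top_pos[OF nstack_s' assms(1) assms(3)] by simp
  show ?thesis
  proof (cases "x \<in> positions (top_sub (Suc (n-r)) s')")
    case X: True
    then have "take a x = take a (top_pos s')" "x!a = top_pos s' ! a" using mx by auto
    then have "y!a \<le> x!a" using c3 assms(4) by simp
    then show ?thesis using assms(5) by simp
  next
    case X: False
    show ?thesis
    proof (cases "y \<in> positions (top_sub (Suc (n-r)) s')")
      case True
      then have "hist_push y ! a = y!a - 1" unfolding hist_push_def dec_def using lx assms(1) True \<open>n - r = a\<close> by simp
      moreover have "hist_push x = x" using X unfolding hist_push_def by simp
      ultimately show ?thesis using assms(5) by simp
    next
      case False
      then show ?thesis using X assms(5) unfolding hist_push_def by simp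
    qed
  qed
qed

lemma hist_push_max_at: assumes "a < n" "w \<in> positions s'" "max_at s' a w"
  shows "max_at s a (hist_push w)"
proof (cases "w \<in> positions (top_sub (Suc (n-r)) s')")
  case False
  then have "hist_push w = w" unfolding hist_push_def by simp
  then show ?thesis using assms(3) positions_push_supset unfolding max_at_def by auto
next
  case True
  then obtain y where y: "y \<in> positions (last l)" "w = inc y" "dec w = y" using mem_top_sub_push_dec by blast
  have hw: "hist_push w = y" using True y unfolding hist_push_def by simp
  have ys: "y \<in> positions s" "take (Suc (n-r)) y = take (Suc (n-r)) (top_pos s)" using y(1) positions_last_top_list by auto
  have ly: "length y = n" using length_positions ys(1) by simp
  show ?thesis unfolding max_at_def hw
  proof (intro ballI impI)
    fix z assume z: "z \<in> positions s" "take a z = take a y"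
    have lz: "length z = n" using length_positions z(1) by simp
    consider "n - r < a" | "a < n - r" | "n - r = a" by linarith
    then show "z ! a \<le> y ! a"
    proof cases
      case 1
      have "take (Suc (n-r)) z = take (Suc (n-r)) y" using take_eq_take_le[OF _ z(2)] 1 by simp
      then have "z \<in> positions (last l)" using positions_last_top_list z(1) ys(2) by simp
      then have "inc z \<in> positions (top_sub (Suc (n-r)) s')" using positions_top_sub_push by simp
      then have iz: "inc z \<in> positions s'" using positions_top_sub_subset by blast
      have "take a (inc z) = take a w" using z(2) y(2) nth_eq_of_take_eq[OF _ z(2), of "n-r"] 1 unfolding inc_def
        by (simp add: take_update_swap)
      then have "inc z ! a \<le> w ! a" using assms(3) iz unfolding max_at_def by blast
      then show ?thesis using 1 y(2) unfolding inc_def by simp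
    next
      case 2
      have "take a w = take a y" using y(2) 2 unfolding inc_def by simp
      then have "z ! a \<le> w ! a" using assms(3) z positions_push_supset unfolding max_at_def by auto
      then show ?thesis using y(2) 2 unfolding inc_def by simp
    next
      case 3
      have "take a y = take a (top_pos s)" using take_eq_take_le[OF _ ys(2), of a] 3 by simp
      then have "z ! a \<le> top_pos s ! a" using position_le_top_pos[OF nstack_s assms(1) z(1)] z(2) by simp
      moreover have "y ! a = top_pos s ! a" using nth_eq_of_take_eq[OF _ ys(2), of a] 3 by simp
      ultimately show ?thesis by simp
    qed
  qed
qed

end

lemma push_stepI:
  "nstack n s \<Longrightarrow> nstack n s' \<Longrightarrow> 1 \<le> r \<Longrightarrow> r \<le> n \<Longrightarrow>
   push n r \<gamma> s = Some s' \<Longrightarrow> \<exists>l. push_step n r \<gamma> s s' l"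
  using push_SomeD[of n r \<gamma> s s'] unfolding push_step_def by blast

subsection \<open>Steps and their histories\<close>

text \<open>\<open>h\<close> is the backward history map of the step on positions; only a push renumbers
  positions, namely those of the new topmost stack.\<close>

definition stack_step :: "nat \<Rightarrow> 'g stk \<Rightarrow> 'g stk \<Rightarrow> (nat list \<Rightarrow> nat list) \<Rightarrow> bool" where
  "stack_step n s s' h =
    ((s' = s \<and> h = id) \<or> (\<exists>r. 1 \<le> r \<and> r \<le> n \<and> pop n r s = Some s' \<and> h = id) \<or>
     (\<exists>r \<gamma>. 1 \<le> r \<and> r \<le> n \<and> push n r \<gamma> s = Some s' \<and>
        h = (\<lambda>x. if x \<in> positions (top_sub (Suc (n-r)) s') then x[n-r := x!(n-r) - 1] else x)))"

lemma succ_stack_step: assumes "dpda n \<delta>" "succ n \<delta> c c'"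
  shows "stack_step n (snd c) (snd c') (hist_step n \<delta> c c')"
proof -
  from assms(2) obtain tr where tr: "\<delta> (fst c) (topsym n (snd c)) = Some tr" unfolding succ_def by (auto split: option.splits)
  show ?thesis
  proof (cases tr)
    case (Read f)
    then obtain a where "c' = (f a, snd c)" using assms(2) tr unfolding succ_def by auto
    moreover have "hist_step n \<delta> c c' = id" using tr Read unfolding hist_step_def by (auto simp: fun_eq_iff)
    ultimately show ?thesis unfolding stack_step_def by simp
  next
    case (Op q p)
    then obtain s' where s': "op_app n p (snd c) = Some s'" "c' = (q, s')" using assms(2) tr unfolding succ_def by auto
    have ord: "1 \<le> order p" "order p \<le> n" using assms(1) tr Op unfolding dpda_def by blast+
    show ?thesis
    proof (cases p)
      case (Pop r)
      have "hist_step n \<delta> c c' = id" using tr Op Pop unfolding hist_step_def by (auto simp: fun_eq_iff)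
      then show ?thesis using s' ord Pop unfolding stack_step_def by auto
    next
      case (Push r g)
      have e: "n - (r - 1) = Suc (n - r)" using ord Push by simp
      have "hist_step n \<delta> c c' = (\<lambda>x. if x \<in> positions (top_sub (Suc (n-r)) (snd c')) then x[n-r := x!(n-r) - 1] else x)"
        using tr Op Push e unfolding hist_step_def by (auto simp: fun_eq_iff)
      then show ?thesis using s' ord Push unfolding stack_step_def by auto
    qed
  qed
qed

lemma stack_step_cases:
  assumes "stack_step n s s' h" "nstack n s" "nstack n s'"
  obtains (id) "s' = s" "h = id"
  | (pop) r l where "pop_step n r s s' l" "h = id"
  | (push) r \<gamma> l where "push_step n r \<gamma> s s' l" "h = push_step.hist_push n r s'"
proof -
  from assms(1) consider "s' = s \<and> h = id" | "\<exists>r. 1 \<le> r \<and> r \<le> n \<and> pop n r s = Some s' \<and> h = id" |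
     "\<exists>r \<gamma>. 1 \<le> r \<and> r \<le> n \<and> push n r \<gamma> s = Some s' \<and>
        h = (\<lambda>x. if x \<in> positions (top_sub (Suc (n-r)) s') then x[n-r := x!(n-r) - 1] else x)"
    unfolding stack_step_def by blast
  then show ?thesis
  proof cases
    case 1 then show ?thesis using that(1) by blast
  next
    case 2
    then obtain r where r: "1 \<le> r" "r \<le> n" "pop n r s = Some s'" "h = id" by blast
    then obtain l where "pop_step n r s s' l" using pop_stepI[OF assms(2)] by blast
    then show ?thesis using that(2) r by blast
  next
    case 3
    then obtain r \<gamma> where r: "1 \<le> r" "r \<le> n" "push n r \<gamma> s = Some s'"
      "h = (\<lambda>x. if x \<in> positions (top_sub (Suc (n-r)) s') then x[n-r := x!(n-r) - 1] else x)" by blast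
    then obtain l where pc: "push_step n r \<gamma> s s' l" using push_stepI[OF assms(2,3)] by blast
    have "h = push_step.hist_push n r s'"
      using r(4) unfolding push_step.hist_push_def[OF pc] push_step.dec_def[OF pc] by (simp add: fun_eq_iff)
    then show ?thesis using that(3) pc by blast
  qed
qed

lemma stack_step_hist_mem:
  "stack_step n s s' h \<Longrightarrow> nstack n s \<Longrightarrow> nstack n s' \<Longrightarrow>
   x \<in> positions s' \<Longrightarrow> h x \<in> positions s"
  by (erule stack_step_cases) (auto dest: pop_step.positions_pop_subset push_step.hist_push_mem)

lemma stack_step_hist_take:
  "stack_step n s s' h \<Longrightarrow> nstack n s \<Longrightarrow> nstack n s' \<Longrightarrow> d \<le> n \<Longrightarrow>
   x \<in> positions s' \<Longrightarrow> y \<in> positions s' \<Longrightarrow> take d x = take d y \<Longrightarrow> take d (h x) = take d (h y)"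
  by (erule stack_step_cases) (auto dest: push_step.hist_push_take)

lemma stack_step_hist_adjacent:
  "stack_step n s s' h \<Longrightarrow> nstack n s \<Longrightarrow> nstack n s' \<Longrightarrow> a < n \<Longrightarrow>
   x \<in> positions s' \<Longrightarrow> y \<in> positions s' \<Longrightarrow> take a x = take a y \<Longrightarrow> y!a = Suc (x!a) \<Longrightarrow>
   h y ! a = h x ! a \<or> h y ! a = Suc (h x ! a)"
  by (erule stack_step_cases) (auto dest: push_step.hist_push_adjacent)

lemma stack_step_hist_max_at:
  assumes "stack_step n s s' h" "nstack n s" "nstack n s'" "a < n" "w \<in> positions s'" "max_at s' a w"
  shows "max_at s a (h w) \<or>
    (pop n (n-a) s = Some s' \<and> h w = w \<and> take a w = take a (top_pos s') \<and> take a w = take a (top_pos s))"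
  using assms(1-3)
proof (cases rule: stack_step_cases)
  case id then show ?thesis using assms by simp
next
  case (pop r l)
  have "max_at s a w \<or> (n - r = a \<and> take a w = take a (top_pos s') \<and> take a w = take a (top_pos s))"
    using pop_step.pop_max_at[OF pop(1) assms(3,4,5,6)] .
  moreover have "n - r = a \<Longrightarrow> r = n - a" using pop_step.rn[OF pop(1)] assms(4) by simp
  ultimately show ?thesis using pop pop_step.pop_s[OF pop(1)] by auto
next
  case (push r \<gamma> l)
  then show ?thesis using push_step.hist_push_max_at[OF push(1) assms(4,5,6)] by simp
qed

lemma hist_snoc: "xs \<noteq> [] \<Longrightarrow> hist n \<delta> (xs @ [c']) x = hist n \<delta> xs (hist_step n \<delta> (last xs) c' x)"
proof -
  assume "xs \<noteq> []"
  then obtain ys y where xs: "xs = ys @ [y]" by (cases xs rule: rev_cases) auto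
  show ?thesis unfolding hist_def xs by simp
qed

subsection \<open>Histories along a run\<close>

locale dpda_run =
  fixes n :: nat and \<delta> :: "'q \<Rightarrow> 'g \<Rightarrow> ('q, 'a, 'g) tr option" and R :: "('q, 'g) config list"
  assumes dp: "dpda n \<delta>" and rn: "run n \<delta> R"
begin

definition S where "S i = snd (R ! i)"
definition H where "H i j x = hist n \<delta> (sub R i j) x"
definition hstep where "hstep i = hist_step n \<delta> (R ! i) (R ! Suc i)"

abbreviation tp :: "nat \<Rightarrow> nat list" where "tp i \<equiv> top_pos (S i)"

lemma nstack_S: "i < length R \<Longrightarrow> nstack n (S i)"
  using rn unfolding run_def valid_config_def nstack_def S_def by (auto dest: nth_mem)

lemma stack_step_S: "Suc i < length R \<Longrightarrow> stack_step n (S i) (S (Suc i)) (hstep i)"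
  using succ_stack_step[OF dp, of "R!i" "R ! Suc i"] rn unfolding run_def S_def hstep_def by auto

lemma sub_snoc: "i \<le> j \<Longrightarrow> Suc j < length R \<Longrightarrow> sub R i (Suc j) = sub R i j @ [R ! Suc j]"
  unfolding sub_def by (simp add: take_Suc_conv_app_nth)

lemma sub_single: "j < length R \<Longrightarrow> sub R j j = [R ! j]"
  unfolding sub_def by (simp add: take_Suc_conv_app_nth)

lemma sub_ne: "i \<le> j \<Longrightarrow> j < length R \<Longrightarrow> sub R i j \<noteq> []"
  unfolding sub_def by simp

lemma sub_last: "i \<le> j \<Longrightarrow> j < length R \<Longrightarrow> last (sub R i j) = R ! j"
proof -
  assume a: "i \<le> j" "j < length R"
  have l: "length (sub R i j) = Suc j - i" unfolding sub_def using a by simp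
  have "last (sub R i j) = sub R i j ! (Suc j - i - 1)" using l a sub_ne[OF a] by (simp add: last_conv_nth)
  also have "\<dots> = R ! j" unfolding sub_def using a by simp
  finally show ?thesis .
qed

lemma sub_hd: "i \<le> j \<Longrightarrow> j < length R \<Longrightarrow> hd (sub R i j) = R ! i"
  unfolding sub_def by (simp add: hd_conv_nth min_def hd_drop_conv_nth)

lemma H_refl: "j < length R \<Longrightarrow> H j j x = x"
  unfolding H_def hist_def using sub_single by simp

lemma H_Suc: "i \<le> j \<Longrightarrow> Suc j < length R \<Longrightarrow> H i (Suc j) x = H i j (hstep j x)"
proof -
  assume a: "i \<le> j" "Suc j < length R"
  have ne: "sub R i j \<noteq> []" using sub_ne a by simp
  have "H i (Suc j) x = hist n \<delta> (sub R i j @ [R ! Suc j]) x" unfolding H_def using sub_snoc[OF a] by simp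
  also have "\<dots> = hist n \<delta> (sub R i j) (hist_step n \<delta> (last (sub R i j)) (R ! Suc j) x)" using hist_snoc[OF ne] .
  also have "\<dots> = H i j (hstep j x)" unfolding H_def hstep_def using sub_last a by simp
  finally show ?thesis .
qed

lemma H_step: "Suc j < length R \<Longrightarrow> H j (Suc j) x = hstep j x"
  using H_Suc[of j j x] H_refl[of j] by simp

lemma H_trans: "i \<le> j \<Longrightarrow> j \<le> l \<Longrightarrow> l < length R \<Longrightarrow> H i l x = H i j (H j l x)"
proof (induction l arbitrary: x)
  case 0 then show ?case using H_refl by simp
next
  case (Suc l)
  show ?case
  proof (cases "j = Suc l")
    case True then show ?thesis using H_refl Suc.prems by simp
  next
    case False
    then have jl: "j \<le> l" using Suc.prems by simp
    have l: "Suc l < length R" using Suc.prems by simp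
    have "H i (Suc l) x = H i l (hstep l x)" using H_Suc[OF _ l] Suc.prems jl by simp
    also have "\<dots> = H i j (H j l (hstep l x))" using Suc.IH[of "hstep l x"] Suc.prems jl by simp
    also have "H j l (hstep l x) = H j (Suc l) x" using H_Suc[OF jl l] by simp
    finally show ?thesis .
  qed
qed

lemma H_mem:
  "i \<le> j \<Longrightarrow> j < length R \<Longrightarrow> x \<in> positions (S j) \<Longrightarrow>
   H i j x \<in> positions (S i)"
proof (induction j arbitrary: x)
  case 0 then show ?case using H_refl by simp
next
  case (Suc j)
  show ?case
  proof (cases "i = Suc j")
    case True then show ?thesis using H_refl Suc.prems by simp
  next
    case False
    then have ij: "i \<le> j" using Suc.prems by simp
    have "hstep j x \<in> positions (S j)" using stack_step_hist_mem[OF stack_step_S nstack_S nstack_S] Suc.prems by simp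
    then show ?thesis using H_Suc[OF ij Suc.prems(2)] Suc.IH ij Suc.prems by simp
  qed
qed

lemma H_take: "i \<le> j \<Longrightarrow> j < length R \<Longrightarrow> d \<le> n \<Longrightarrow> x \<in> positions (S j) \<Longrightarrow> y \<in> positions (S j) \<Longrightarrow>
  take d x = take d y \<Longrightarrow> take d (H i j x) = take d (H i j y)"
proof (induction j arbitrary: x y)
  case 0 then show ?case using H_refl by simp
next
  case (Suc j)
  show ?case
  proof (cases "i = Suc j")
    case True then show ?thesis using H_refl Suc.prems by simp
  next
    case False
    then have ij: "i \<le> j" using Suc.prems by simp
    have m: "hstep j x \<in> positions (S j)" "hstep j y \<in> positions (S j)" using stack_step_hist_mem[OF stack_step_S nstack_S nstack_S] Suc.prems by simp_all
    have "take d (hstep j x) = take d (hstep j y)"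
      apply (rule stack_step_hist_take[OF stack_step_S nstack_S nstack_S])
      using Suc.prems by auto
    then show ?thesis using H_Suc[OF ij Suc.prems(2)] Suc.IH[OF ij _ _ m] Suc.prems by simp
  qed
qed

lemma H_adjacent: "i \<le> j \<Longrightarrow> j < length R \<Longrightarrow> a < n \<Longrightarrow> x \<in> positions (S j) \<Longrightarrow> y \<in> positions (S j) \<Longrightarrow>
  take a x = take a y \<Longrightarrow> y!a = Suc (x!a) \<Longrightarrow> H i j y ! a = H i j x ! a \<or> H i j y ! a = Suc (H i j x ! a)"
proof (induction j arbitrary: x y)
  case 0 then show ?case using H_refl by simp
next
  case (Suc j)
  show ?case
  proof (cases "i = Suc j")
    case True then show ?thesis using H_refl Suc.prems by simp
  next
    case False
    then have ij: "i \<le> j" using Suc.prems by simp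
    have m: "hstep j x \<in> positions (S j)" "hstep j y \<in> positions (S j)" using stack_step_hist_mem[OF stack_step_S nstack_S nstack_S] Suc.prems by simp_all
    have t: "take a (hstep j x) = take a (hstep j y)"
      apply (rule stack_step_hist_take[OF stack_step_S nstack_S nstack_S])
      using Suc.prems by auto
    have c: "hstep j y ! a = hstep j x ! a \<or> hstep j y ! a = Suc (hstep j x ! a)"
      apply (rule stack_step_hist_adjacent[OF stack_step_S nstack_S nstack_S])
      using Suc.prems by auto
    have oj: "nstack n (S j)" using nstack_S Suc.prems by simp
    have lx: "length (hstep j x) = n" "length (hstep j y) = n" using nstack_positions_length[OF oj] m by auto
    show ?thesis
    proof (cases "hstep j y ! a = hstep j x ! a")
      case True
      then have "take (Suc a) (hstep j x) = take (Suc a) (hstep j y)" using take_Suc_eq_iff[of a "hstep j x" "hstep j y"] lx t Suc.prems by simp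
      then have "take (Suc a) (H i j (hstep j x)) = take (Suc a) (H i j (hstep j y))"
        using H_take[OF ij _ _ m] Suc.prems by simp
      then have "H i j (hstep j x) ! a = H i j (hstep j y) ! a" using nth_eq_of_take_eq[of a "Suc a"] by blast
      then have "H i j (hstep j y) ! a = H i j (hstep j x) ! a" by simp
      then show ?thesis using H_Suc[OF ij Suc.prems(2)] by simp
    next
      case False
      then have "hstep j y ! a = Suc (hstep j x ! a)" using c by simp
      then show ?thesis using H_Suc[OF ij Suc.prems(2)] Suc.IH[OF ij _ _ m t] Suc.prems by simp
    qed
  qed
qed

lemma upper_sub_iff: "i \<le> j \<Longrightarrow> j < length R \<Longrightarrow> k \<le> n \<Longrightarrow>
  upper n \<delta> k (sub R i j) = (take (n-k) (H i j (top_pos (S j))) = take (n-k) (top_pos (S i)))"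
proof -
  assume a: "i \<le> j" "j < length R" "k \<le> n"
  have o: "nstack n (S i)" "nstack n (S j)" using nstack_S a by auto
  have u: "upper n \<delta> k (sub R i j) = (\<forall>x\<in>positions (top_sub (n - k) (S j)). H i j x \<in> positions (top_sub (n - k) (S i)))"
    unfolding upper_def H_def S_def using sub_last[OF a(1,2)] sub_hd[OF a(1,2)] by simp
  have t: "top_pos (S j) \<in> positions (S j)" using nstack_top_pos_mem[OF o(2)] .
  show ?thesis
  proof
    assume "upper n \<delta> k (sub R i j)"
    then have "H i j (top_pos (S j)) \<in> positions (top_sub (n - k) (S i))" using u positions_top_sub[OF o(2), of "n-k"] t by simp
    then show "take (n-k) (H i j (top_pos (S j))) = take (n-k) (top_pos (S i))" using positions_top_sub[OF o(1), of "n-k"] by simp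
  next
    assume e: "take (n-k) (H i j (top_pos (S j))) = take (n-k) (top_pos (S i))"
    have "H i j x \<in> positions (top_sub (n - k) (S i))" if "x \<in> positions (top_sub (n - k) (S j))" for x
    proof -
      have x: "x \<in> positions (S j)" "take (n-k) x = take (n-k) (top_pos (S j))" using that positions_top_sub[OF o(2), of "n-k"] by auto
      have "take (n-k) (H i j x) = take (n-k) (top_pos (S i))" using H_take[OF a(1,2) _ x(1) t x(2)] e by simp
      moreover have "H i j x \<in> positions (S i)" using H_mem[OF a(1,2) x(1)] .
      ultimately show ?thesis using positions_top_sub[OF o(1), of "n-k"] by simp
    qed
    then show "upper n \<delta> k (sub R i j)" using u by blast
  qed
qed

lemma length_positions_S: "i < length R \<Longrightarrow> x \<in> positions (S i) \<Longrightarrow> length x = n"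
  using nstack_positions_length nstack_S by blast

lemma max_at_top_pos: "i < length R \<Longrightarrow> a < n \<Longrightarrow> max_at (S i) a (top_pos (S i))"
  unfolding max_at_def using position_le_top_pos nstack_S by blast

lemma tp_mem: "i < length R \<Longrightarrow> tp i \<in> positions (S i)"
  using nstack_top_pos_mem nstack_S by blast

lemma take_hist_upper_suffix:
  assumes ij: "i \<le> j" and jl: "j \<le> l" and l: "l < length R" and "k \<le> n"
    and "upper n \<delta> k (sub R j l)"
  shows "take (n - k) (H i l (tp l)) = take (n - k) (H i j (tp j))"
proof -
  have "H j l (tp l) \<in> positions (S j)" using H_mem[OF jl l tp_mem[OF l]] .
  moreover have "take (n - k) (H j l (tp l)) = take (n - k) (tp j)"
    using assms upper_sub_iff by simp
  ultimately have "take (n - k) (H i j (H j l (tp l))) = take (n - k) (H i j (tp j))"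
    using H_take[OF ij _ _ _ tp_mem] jl l by simp
  then show ?thesis using H_trans[OF ij jl l] by simp
qed

lemma upper_sub_trans:
  "i \<le> j \<Longrightarrow> j \<le> l \<Longrightarrow> l < length R \<Longrightarrow> k \<le> n \<Longrightarrow>
   upper n \<delta> k (sub R i j) \<Longrightarrow> upper n \<delta> k (sub R j l) \<Longrightarrow> upper n \<delta> k (sub R i l)"
  using take_hist_upper_suffix upper_sub_iff by simp

lemma upper_sub_cancel:
  "i \<le> j \<Longrightarrow> j \<le> l \<Longrightarrow> l < length R \<Longrightarrow> k \<le> n \<Longrightarrow>
   upper n \<delta> k (sub R i l) \<Longrightarrow> upper n \<delta> k (sub R j l) \<Longrightarrow> upper n \<delta> k (sub R i j)"
  using take_hist_upper_suffix upper_sub_iff by simp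

lemma upper_pred_of_max_at:
  assumes im: "i \<le> m" and m: "m < length R" and "1 \<le> k" "k \<le> n"
    and up: "upper n \<delta> k (sub R i m)" and max: "max_at (S i) (n - k) (H i m (tp m))"
  shows "upper n \<delta> (k - 1) (sub R i m)"
proof -
  define w where "w = H i m (tp m)"
  have iR: "i < length R" using im m by simp
  have w_mem: "w \<in> positions (S i)" using H_mem[OF im m tp_mem[OF m]] unfolding w_def .
  have prefix: "take (n - k) w = take (n - k) (tp i)" using up upper_sub_iff im m assms(4) unfolding w_def by simp
  have "tp i ! (n - k) \<le> w ! (n - k)" using max tp_mem[OF iR] prefix unfolding max_at_def w_def by simp
  moreover have "w ! (n - k) \<le> tp i ! (n - k)"
    using position_le_top_pos[OF nstack_S[OF iR] _ w_mem prefix] assms(3,4) by simp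
  moreover have "length w = n" "length (tp i) = n" using length_positions_S iR w_mem tp_mem by auto
  ultimately have "take (Suc (n - k)) w = take (Suc (n - k)) (tp i)"
    using take_Suc_eq_iff[of "n - k" w "tp i"] prefix assms(3,4) by simp
  moreover have "n - (k - 1) = Suc (n - k)" using assms(3,4) by simp
  ultimately show ?thesis using upper_sub_iff im m unfolding w_def by simp
qed

text \<open>Only a \<open>pop\<^sup>k\<close> that keeps the history inside the topmost \<open>k\<close>-stack can
  destroy this maximality, and such a step makes two consecutive suffixes \<open>k\<close>-upper.\<close>

lemma max_at_hist_top:
  assumes im: "i \<le> m" and m: "m < length R" and "1 \<le> k" "k \<le> n"
    and no_double: "\<And>p. i \<le> p \<Longrightarrow> p < m \<Longrightarrow> \<not> (upper n \<delta> k (sub R p m) \<and> upper n \<delta> k (sub R (Suc p) m))"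
  shows "max_at (S i) (n - k) (H i m (tp m))"
  using im
proof (induction i rule: inc_induct)
  case base
  show ?case using max_at_top_pos[OF m] H_refl[OF m] assms(3,4) by simp
next
  case (step p)
  define w where "w = H (Suc p) m (tp m)"
  have pR: "Suc p < length R" using step.hyps m by simp
  have w_mem: "w \<in> positions (S (Suc p))" using H_mem[OF _ m tp_mem[OF m]] step.hyps unfolding w_def by simp
  have Hp: "H p m (tp m) = hstep p w"
    using H_trans[of p "Suc p" m] H_step[OF pR] step.hyps m unfolding w_def by simp
  have "max_at (S p) (n - k) (hstep p w) \<or>
      (hstep p w = w \<and> take (n - k) w = take (n - k) (tp (Suc p)) \<and> take (n - k) w = take (n - k) (tp p))"
    using stack_step_hist_max_at[OF stack_step_S[OF pR] nstack_S nstack_S _ w_mem step.IH[folded w_def]]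
      pR assms(3,4) by auto
  moreover have "\<not> (take (n - k) w = take (n - k) (tp (Suc p)) \<and> take (n - k) (hstep p w) = take (n - k) (tp p))"
    using no_double[OF step.hyps] upper_sub_iff[of "Suc p" m k] upper_sub_iff[of p m k] step.hyps m assms(4) Hp
    unfolding w_def by auto
  ultimately show ?case using Hp by auto
qed

end

subsection \<open>The return condition\<close>

locale kreturn_setting = dpda_run +
  fixes k :: nat
  assumes k_ge: "1 \<le> k" and k_le: "k \<le> n" and length_R: "2 \<le> length R"
    and not_upper: "\<not> upper n \<delta> (k - 1) R"
    and upper_suffix_ex: "\<exists>j < length R - 1. upper n \<delta> k (sub R j (length R - 1))"
    and upper_prefix:
      "upper n \<delta> (k - 1) (sub R 0 (GREATEST j. j < length R - 1 \<and> upper n \<delta> k (sub R j (length R - 1))))"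
begin

abbreviation m :: nat where "m \<equiv> length R - 1"

abbreviation j :: nat where "j \<equiv> GREATEST j. j < m \<and> upper n \<delta> k (sub R j m)"

lemma m_less: "m < length R" and m_ge: "1 \<le> m"
  using length_R by auto

lemma sub_R: "sub R 0 m = R"
  unfolding sub_def using m_less by simp

lemma n_minus_pred_k: "n - (k - 1) = Suc (n - k)"
  using k_ge k_le by simp

lemma upper_pred_sub_iff:
  "i \<le> l \<Longrightarrow> l < length R \<Longrightarrow>
   upper n \<delta> (k - 1) (sub R i l) \<longleftrightarrow> take (Suc (n - k)) (H i l (tp l)) = take (Suc (n - k)) (tp i)"
  using upper_sub_iff[of i l "k - 1", unfolded n_minus_pred_k] k_le by simp

lemma j_less: "j < m" and upper_suffix_j: "upper n \<delta> k (sub R j m)"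
  using GreatestI_ex_nat[of "\<lambda>j. j < m \<and> upper n \<delta> k (sub R j m)" m] upper_suffix_ex by auto

lemma j_greatest: "i < m \<Longrightarrow> upper n \<delta> k (sub R i m) \<Longrightarrow> i \<le> j"
  by (rule Greatest_le_nat[of _ _ m]) auto

lemma not_upper_pred_suffix:
  assumes "i \<le> m" "upper n \<delta> (k - 1) (sub R 0 i)"
  shows "\<not> upper n \<delta> (k - 1) (sub R i m)"
proof
  assume "upper n \<delta> (k - 1) (sub R i m)"
  with assms have "upper n \<delta> (k - 1) (sub R 0 m)"
    using upper_sub_trans[OF _ assms(1) m_less] k_le by simp
  with not_upper sub_R show False by simp
qed

lemma j_eq: "j = m - 1"
proof (rule ccontr)
  assume "j \<noteq> m - 1"
  with j_less have "j < m - 1" by simp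
  then have "\<not> (upper n \<delta> k (sub R p m) \<and> upper n \<delta> k (sub R (Suc p) m))" if "j \<le> p" "p < m" for p
    using that j_greatest[of p] j_greatest[of "Suc p"] by (cases "Suc p < m") auto
  then have "max_at (S j) (n - k) (H j m (tp m))"
    using max_at_hist_top[of j m k] j_less m_less k_ge k_le by simp
  then have "upper n \<delta> (k - 1) (sub R j m)"
    using upper_pred_of_max_at[OF _ m_less k_ge k_le upper_suffix_j] j_less by simp
  then show False using not_upper_pred_suffix j_less upper_prefix by simp
qed

lemma last_step_pop: "pop n k (S (m - 1)) = Some (S m)" and hstep_last: "hstep (m - 1) (tp m) = tp m"
proof -
  have mR: "Suc (m - 1) < length R" "Suc (m - 1) = m" using m_less m_ge by auto
  have step: "stack_step n (S (m - 1)) (S m) (hstep (m - 1))" using stack_step_S[OF mR(1)] mR(2) by simp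
  have H_last: "H (m - 1) m (tp m) = hstep (m - 1) (tp m)" using H_step[OF mR(1)] mR(2) by simp
  have "\<not> max_at (S (m - 1)) (n - k) (hstep (m - 1) (tp m))"
  proof
    assume "max_at (S (m - 1)) (n - k) (hstep (m - 1) (tp m))"
    then have "upper n \<delta> (k - 1) (sub R (m - 1) m)"
      using upper_pred_of_max_at[of "m - 1" m k] m_less k_ge k_le upper_suffix_j j_eq H_last by simp
    then show False using not_upper_pred_suffix[OF diff_le_self] upper_prefix j_eq by simp
  qed
  moreover have "max_at (S m) (n - k) (tp m)" using max_at_top_pos[OF m_less] k_ge k_le by simp
  moreover have "m - 1 < length R" "n - k < n" using m_less k_ge k_le by auto
  ultimately have "pop n (n - (n - k)) (S (m - 1)) = Some (S m) \<and> hstep (m - 1) (tp m) = tp m"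
    using stack_step_hist_max_at[OF step nstack_S nstack_S[OF m_less] _ tp_mem[OF m_less]] by blast
  then show "pop n k (S (m - 1)) = Some (S m)" "hstep (m - 1) (tp m) = tp m"
    using k_le by simp_all
qed

text \<open>The last step is a \<open>pop\<^sup>k\<close>, so the top positions of its two configurations
  are adjacent in coordinate \<open>n - k\<close>.\<close>

lemma hist_last_adjacent:
  assumes "i \<le> m - 1"
  shows "take (n - k) (H i m (tp m)) = take (n - k) (H i (m - 1) (tp (m - 1)))"
    and "H i (m - 1) (tp (m - 1)) ! (n - k) = H i m (tp m) ! (n - k) \<or>
         H i (m - 1) (tp (m - 1)) ! (n - k) = Suc (H i m (tp m) ! (n - k))"
proof -
  have mR: "m - 1 < length R" "Suc (m - 1) < length R" "Suc (m - 1) = m" using m_less m_ge by auto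
  obtain l where pop: "pop_step n k (S (m - 1)) (S m) l"
    using pop_stepI[OF nstack_S[OF mR(1)] k_ge k_le last_step_pop] by blast
  have prefix: "take (n - k) (tp m) = take (n - k) (tp (m - 1))"
    using pop_step.top_pos_pop_prefix[OF pop] .
  have index: "tp (m - 1) ! (n - k) = Suc (tp m ! (n - k))"
    using pop_step.top_pos_pop_nth[OF pop] by simp
  have mem: "tp m \<in> positions (S (m - 1))" "tp (m - 1) \<in> positions (S (m - 1))"
    using pop_step.positions_pop_subset[OF pop] tp_mem[OF m_less] tp_mem[OF mR(1)] by auto
  have H_m: "H i m (tp m) = H i (m - 1) (tp m)"
    using H_trans[of i "m - 1" m "tp m"] H_step[OF mR(2)] hstep_last assms m_less mR(3) by simp
  show "take (n - k) (H i m (tp m)) = take (n - k) (H i (m - 1) (tp (m - 1)))"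
    using H_take[OF assms mR(1) _ mem prefix] H_m by simp
  show "H i (m - 1) (tp (m - 1)) ! (n - k) = H i m (tp m) ! (n - k) \<or>
        H i (m - 1) (tp (m - 1)) ! (n - k) = Suc (H i m (tp m) ! (n - k))"
    using H_adjacent[OF assms mR(1) _ mem prefix index] H_m k_ge k_le by simp
qed

lemma upper_pred_drop_last:
  assumes im: "i \<le> m - 1" and up: "upper n \<delta> (k - 1) (sub R i m)"
  shows "upper n \<delta> (k - 1) (sub R i (m - 1))"
proof -
  define u where "u = H i m (tp m)"
  define v where "v = H i (m - 1) (tp (m - 1))"
  have iR: "i < length R" and mR: "m - 1 < length R" using im m_less by auto
  have u_top: "take (Suc (n - k)) u = take (Suc (n - k)) (tp i)"
    using up upper_pred_sub_iff[of i m] im m_less unfolding u_def by simp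
  have v_mem: "v \<in> positions (S i)" using H_mem[OF im mR tp_mem[OF mR]] unfolding v_def .
  have v_prefix: "take (n - k) v = take (n - k) (tp i)"
    using hist_last_adjacent(1)[OF im] take_eq_take_le[OF _ u_top] unfolding u_def v_def by simp
  have u_index: "u ! (n - k) = tp i ! (n - k)" using nth_eq_of_take_eq[OF _ u_top] by simp
  have "v ! (n - k) \<le> tp i ! (n - k)"
    using position_le_top_pos[OF nstack_S[OF iR] _ v_mem v_prefix] k_ge k_le by simp
  then have "v ! (n - k) = tp i ! (n - k)"
    using hist_last_adjacent(2)[OF im] u_index unfolding u_def v_def by auto
  moreover have "length v = n" "length (tp i) = n" using length_positions_S iR v_mem tp_mem by auto
  ultimately have "take (Suc (n - k)) v = take (Suc (n - k)) (tp i)"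
    using take_Suc_eq_iff[of "n - k" v "tp i"] v_prefix k_ge k_le by simp
  then show ?thesis using upper_pred_sub_iff[of i "m - 1"] im mR unfolding v_def by simp
qed

lemma no_upper_pred_suffix: "i < m \<Longrightarrow> \<not> upper n \<delta> (k - 1) (sub R i m)"
proof
  assume "i < m" and up: "upper n \<delta> (k - 1) (sub R i m)"
  then have im: "i \<le> m - 1" by simp
  have "upper n \<delta> (k - 1) (sub R 0 (m - 1))" using upper_prefix j_eq by simp
  moreover have "upper n \<delta> (k - 1) (sub R i (m - 1))" using upper_pred_drop_last[OF im up] .
  ultimately have "upper n \<delta> (k - 1) (sub R 0 i)"
    using upper_sub_cancel[of 0 i "m - 1" "k - 1"] im m_less k_le by simp
  then show False using not_upper_pred_suffix[of i] up im by simp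
qed

lemma hist_top_in_pop_first:
  obtains s0' where "pop n k (S 0) = Some s0'"
    "\<forall>x\<in>positions (top_sub (n - (k - 1)) (S m)). H 0 m x \<in> positions (top_sub (n - (k - 1)) s0')"
proof -
  define u where "u = H 0 m (tp m)"
  define v where "v = H 0 (m - 1) (tp (m - 1))"
  have R0: "0 < length R" and mR: "m - 1 < length R" using m_less by auto
  have v_top: "take (Suc (n - k)) v = take (Suc (n - k)) (tp 0)"
    using upper_prefix j_eq upper_pred_sub_iff[of 0 "m - 1"] mR unfolding v_def by simp
  have uv_prefix: "take (n - k) u = take (n - k) v" using hist_last_adjacent(1)[of 0] unfolding u_def v_def by simp
  have u_mem: "u \<in> positions (S 0)" using H_mem[OF _ m_less tp_mem[OF m_less]] unfolding u_def by simp
  have v_mem: "v \<in> positions (S 0)" using H_mem[OF _ mR tp_mem[OF mR]] unfolding v_def by simp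
  have lengths: "length u = n" "length v = n" "length (tp 0) = n"
    using length_positions_S[OF R0] u_mem v_mem tp_mem[OF R0] by auto
  have v_index: "v ! (n - k) = Suc (u ! (n - k))"
  proof (rule ccontr)
    assume "v ! (n - k) \<noteq> Suc (u ! (n - k))"
    then have "v ! (n - k) = u ! (n - k)" using hist_last_adjacent(2)[of 0] unfolding u_def v_def by auto
    then have "take (Suc (n - k)) u = take (Suc (n - k)) (tp 0)"
      using take_Suc_eq_iff[of "n - k" u v] lengths uv_prefix v_top k_ge k_le by simp
    then have "upper n \<delta> (k - 1) R"
      using upper_pred_sub_iff[of 0 m] m_less sub_R unfolding u_def by simp
    with not_upper show False ..
  qed
  have top0_index: "tp 0 ! (n - k) = Suc (u ! (n - k))"
    using nth_eq_of_take_eq[OF _ v_top, of "n - k"] v_index by simp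
  have "0 < u ! (n - k)"
    using nstack_positions_length[OF nstack_S[OF R0] u_mem] lengths k_ge k_le by simp
  then obtain s0' where pop0: "pop n k (S 0) = Some s0'"
    using pop_defined[OF nstack_S[OF R0], of "n - k"] top0_index k_ge k_le by auto
  obtain l0 where pop: "pop_step n k (S 0) s0' l0" using pop_stepI[OF nstack_S[OF R0] k_ge k_le pop0] by blast
  have "H 0 m x \<in> positions (top_sub (n - (k - 1)) s0')"
    if "x \<in> positions (top_sub (n - (k - 1)) (S m))" for x
  proof -
    have x: "x \<in> positions (S m)" "take (Suc (n - k)) x = take (Suc (n - k)) (tp m)"
      using that positions_top_sub[OF nstack_S[OF m_less], of "Suc (n - k)"] n_minus_pred_k k_ge by auto
    have Hx: "take (Suc (n - k)) (H 0 m x) = take (Suc (n - k)) u"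
      using H_take[OF _ m_less _ x(1) tp_mem[OF m_less] x(2)] k_ge k_le unfolding u_def by simp
    have "take (n - k) (H 0 m x) = take (n - k) (tp 0)"
      using take_eq_take_le[OF _ Hx] uv_prefix take_eq_take_le[OF _ v_top] by simp
    moreover have "H 0 m x ! (n - k) = tp 0 ! (n - k) - 1"
      using nth_eq_of_take_eq[OF _ Hx, of "n - k"] top0_index by simp
    moreover have "H 0 m x \<in> positions (S 0)" using H_mem[OF _ m_less x(1)] by simp
    ultimately show ?thesis using pop_step.mem_top_sub_pop[OF pop] n_minus_pred_k by simp
  qed
  with pop0 show ?thesis using that by blast
qed

lemma kreturn: "kreturn n \<delta> k R"
proof -
  obtain s0' where pop0: "pop n k (S 0) = Some s0'"
    and hist_top: "\<forall>x\<in>positions (top_sub (n - (k - 1)) (S m)). H 0 m x \<in> positions (top_sub (n - (k - 1)) s0')"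
    by (rule hist_top_in_pop_first)
  have "snd (hd R) = S 0" "snd (last R) = S m" "\<And>x. hist n \<delta> R x = H 0 m x"
  proof -
    have "R \<noteq> []" using length_R by auto
    then show "snd (hd R) = S 0" "snd (last R) = S m" "\<And>x. hist n \<delta> R x = H 0 m x"
      using sub_R unfolding S_def H_def by (simp_all add: hd_conv_nth last_conv_nth)
  qed
  then show ?thesis unfolding kreturn_def using pop0 hist_top no_upper_pred_suffix by auto
qed

end

theorem mainTheorem7:
  fixes \<delta> :: "'q::finite \<Rightarrow> 'g::finite \<Rightarrow> ('q, 'a::finite, 'g) tr option"
    and n k :: nat and R :: "('q, 'g) config list"
  assumes "1 \<le> n" and "dpda n \<delta>"
    and "1 \<le> k" and "k \<le> n"
    and "run n \<delta> R" and "2 \<le> length R"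
    and "\<not> upper n \<delta> (k - 1) R"
    and "\<exists>j < length R - 1. upper n \<delta> k (sub R j (length R - 1))"
    and "upper n \<delta> (k - 1)
           (sub R 0 (GREATEST j. j < length R - 1 \<and> upper n \<delta> k (sub R j (length R - 1))))"
  shows "kreturn n \<delta> k R"
proof -
  interpret kreturn_setting n \<delta> R k
    using assms(2-9) by unfold_locales
  show ?thesis by (rule kreturn)
qed

end
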